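(* Let $n \geq 2$, $N = \{1,\dots,n\}$, and $\epsilon \in (0,1)$. For each $i \in N$ let $\pi_i : 2^{N\setminus\{i\}} \to \mathbb{R}_{\geq 0}$ be a local score function, and let $\tilde\pi_i$ be the $(\epsilon/n)$-pruning of $\pi_i$ (with $V = N \setminus \{i\}$, $K = n-1$). For a DAG on $N$ with arc set $A$ let $\pi(A) = \prod_{i \in N} \pi_i(A_i)$ and $\tilde\pi(A) = \prod_{i\in N} \tilde\pi_i(A_i)$, where $A_i = \{j : ji \in A\}$. Let $Z = \sum_A \pi(A)$ and $\tilde Z = \sum_A \tilde\pi(A)$, the sums ranging over all arc sets $A$ of DAGs on $N$, and assume $Z > 0$. Then: (i) $\tilde Z \geq (1-\epsilon) Z$; (ii) the Kullback–Leibler divergence $\sum_{A:\,\tilde\pi(A)>0} \frac{\tilde\pi(A)}{\tilde Z}\ln\frac{\tilde\pi(A)/\tilde Z}{\pi(A)/Z}$ of the distribution $\tilde\pi/\tilde Z$ from $\pi/Z$ is at most $\epsilon/(1-\epsilon)$; (iii) the total variation distance $\tfrac12\sum_A \bigl|\pi(A)/Z - \tilde\pi(A)/\tilde Z\bigr|$ is at most $\epsilon$.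
   Context: For $g : 2^V \to \mathbb{R}_{\geq 0}$ on a finite set $V$ with $K = |V|$ elements and $\eta \geq 0$: for $j \in S \subseteq V$ let $\psi(j,S) = \sum_{R:\, j \in R \subseteq S} g(R)\,(1+1/K)^{|R|-K} K^{|R|-|S|}$. The $\eta$-pruning of $g$ is the function $\tilde g$ with $\tilde g(S) = 0$ if $S \neq \emptyset$ and $g(S) < \eta\,\psi(j,S)$ for every $j \in S$, and $\tilde g(S) = g(S)$ otherwise. *)

theory Defs
  imports Complex_Main
begin

definition psi :: "('a set \<Rightarrow> real) \<Rightarrow> nat \<Rightarrow> 'a \<Rightarrow> 'a set \<Rightarrow> real" where
  "psi g K j S = (\<Sum>R\<in>{R. j \<in> R \<and> R \<subseteq> S}.
      g R * (1 + 1 / real K) powi (int (card R) - int K) * (real K) powi (int (card R) - int (card S)))"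

definition prune :: "('a set \<Rightarrow> real) \<Rightarrow> nat \<Rightarrow> real \<Rightarrow> 'a set \<Rightarrow> real" where
  "prune g K \<eta> S = (if S \<noteq> {} \<and> (\<forall>j\<in>S. g S < \<eta> * psi g K j S) then 0 else g S)"

text \<open>Arc sets of DAGs on the node set {1..n}; an arc (j,i) means j -> i.\<close>
definition dags :: "nat \<Rightarrow> (nat \<times> nat) set set" where
  "dags n = {A. A \<subseteq> {1..n} \<times> {1..n} \<and> acyclic A}"

definition parents :: "(nat \<times> nat) set \<Rightarrow> nat \<Rightarrow> nat set" where
  "parents A i = {j. (j, i) \<in> A}"

definition weight :: "nat \<Rightarrow> (nat \<Rightarrow> nat set \<Rightarrow> real) \<Rightarrow> (nat \<times> nat) set \<Rightarrow> real" where
  "weight n p A = (\<Prod>i\<in>{1..n}. p i (parents A i))"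

end

theory Submission
  imports Defs
begin

text \<open>
  For fixed R the coefficients c(R, S) = (1 + 1/K)^(|R| - K) K^(|R| - |S|) of psi sum to 1 over
  the sets S with R \<subseteq> S \<subseteq> V. If the parent set S of node i in a DAG A is pruned, then
  \<pi> i S < \<eta> psi(j, S) for some j \<in> S, which bounds the weight of A by \<eta> times the sum over
  R \<subseteq> S of c(R, S) times the weight of the DAG obtained from A by shrinking the parents of i to R.
  Since (A, R) is determined by that DAG and S, summing over A shows that the DAGs pruned at i
  carry weight at most \<eta> Z. A union bound over the n nodes with \<eta> = \<epsilon>/n gives
  Z - Z~ \<le> \<epsilon> Z. Pruning only sets weights to zero, so the pruned distribution is the original
  one conditioned on the surviving DAGs: its divergence from the original is ln (Z/Z~) \<le> Z/Z~ - 1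
  and the total variation distance is 1 - Z~/Z.
\<close>

subsection \<open>Pruning\<close>

definition psi_coeff :: "nat \<Rightarrow> 'a set \<Rightarrow> 'a set \<Rightarrow> real" where
  "psi_coeff K R S =
     (1 + 1 / real K) powi (int (card R) - int K) * real K powi (int (card R) - int (card S))"

lemma psi_eq_sum_psi_coeff: "psi g K j S = (\<Sum>R\<in>{R. j \<in> R \<and> R \<subseteq> S}. g R * psi_coeff K R S)"
  unfolding psi_def psi_coeff_def by (simp add: mult.assoc)

lemma psi_coeff_nonneg: "psi_coeff K R S \<ge> 0"
  unfolding psi_coeff_def by simp

lemma sum_Pow_power_card:
  fixes x :: real
  assumes "finite U"
  shows "(\<Sum>T\<in>Pow U. x ^ card T) = (1 + x) ^ card U"
  using prod_add[OF assms, of "\<lambda>_. x" "\<lambda>_. 1"] by (simp add: add.commute)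

lemma sum_psi_coeff_supersets:
  assumes "finite V" "card V = K" "R \<subseteq> V"
  shows "(\<Sum>S\<in>{S. R \<subseteq> S \<and> S \<subseteq> V}. psi_coeff K R S) = 1"
proof -
  have fin_R: "finite R" using assms finite_subset by blast
  have card_R: "card R \<le> K" using assms card_mono by blast
  have bij: "bij_betw (\<lambda>T. R \<union> T) (Pow (V - R)) {S. R \<subseteq> S \<and> S \<subseteq> V}"
    by (rule bij_betw_byWitness[where f' = "\<lambda>S. S - R"]) (use assms in auto)
  have "(\<Sum>S\<in>{S. R \<subseteq> S \<and> S \<subseteq> V}. real K powi (int (card R) - int (card S)))
      = (\<Sum>T\<in>Pow (V - R). real K powi (int (card R) - int (card (R \<union> T))))"
    using sum.reindex_bij_betw[OF bij, of "\<lambda>S. real K powi (int (card R) - int (card S))"]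
    by simp
  also have "\<dots> = (\<Sum>T\<in>Pow (V - R). (1 / real K) ^ card T)"
  proof (rule sum.cong)
    fix T assume T: "T \<in> Pow (V - R)"
    then have "finite T" using assms(1) finite_subset by auto
    then have "int (card R) - int (card (R \<union> T)) = - int (card T)"
      using T fin_R by (subst card_Un_disjoint) auto
    then show "real K powi (int (card R) - int (card (R \<union> T))) = (1 / real K) ^ card T"
      by (simp add: power_int_minus power_inverse divide_inverse)
  qed simp
  also have "\<dots> = (1 + 1 / real K) ^ (K - card R)"
    using assms fin_R by (simp add: sum_Pow_power_card card_Diff_subset)
  finally have sum_eq: "(\<Sum>S\<in>{S. R \<subseteq> S \<and> S \<subseteq> V}. real K powi (int (card R) - int (card S)))
      = (1 + 1 / real K) ^ (K - card R)" .
  have "int (card R) - int K = - int (K - card R)" using card_R by simp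
  then have "(1 + 1 / real K) powi (int (card R) - int K) = inverse ((1 + 1 / real K) ^ (K - card R))"
    by (simp only: power_int_minus power_int_of_nat)
  moreover have "0 < 1 + 1 / real K"
    by (simp add: add_pos_nonneg)
  ultimately show ?thesis
    unfolding psi_coeff_def by (simp only: sum_distrib_left[symmetric] sum_eq) simp
qed

definition prunes :: "('a set \<Rightarrow> real) \<Rightarrow> nat \<Rightarrow> real \<Rightarrow> 'a set \<Rightarrow> bool" where
  "prunes g K \<eta> S \<longleftrightarrow> S \<noteq> {} \<and> (\<forall>j\<in>S. g S < \<eta> * psi g K j S)"

lemma prune_eq: "prune g K \<eta> S = (if prunes g K \<eta> S then 0 else g S)"
  unfolding prune_def prunes_def by simp

subsection \<open>Weights of DAGs\<close>

lemma finite_dags: "finite (dags n)"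
  by (rule finite_subset[of _ "Pow ({1..n} \<times> {1..n})"]) (auto simp: dags_def)

lemma parents_subset_if_dags:
  assumes "A \<in> dags n"
  shows "parents A i \<subseteq> {1..n} - {i}"
proof
  fix j assume "j \<in> parents A i"
  then have ji: "(j, i) \<in> A" by (simp add: parents_def)
  with assms have "j \<noteq> i" unfolding dags_def acyclic_def by blast
  with ji assms show "j \<in> {1..n} - {i}" by (auto simp: dags_def)
qed

lemma finite_parents_if_dags: "A \<in> dags n \<Longrightarrow> finite (parents A i)"
  by (meson finite_Diff finite_atLeastAtMost finite_subset parents_subset_if_dags)

lemma weight_nonneg:
  assumes "A \<in> dags n"
    and "\<And>i S. i \<in> {1..n} \<Longrightarrow> S \<subseteq> {1..n} - {i} \<Longrightarrow> \<pi> i S \<ge> 0"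
  shows "weight n \<pi> A \<ge> 0"
  unfolding weight_def by (intro prod_nonneg assms(2) parents_subset_if_dags[OF assms(1)])

lemma weight_remove:
  "i \<in> {1..n} \<Longrightarrow> weight n p A = p i (parents A i) * (\<Prod>k\<in>{1..n} - {i}. p k (parents A k))"
  unfolding weight_def by (subst prod.remove[of _ i]) simp_all

lemma weight_prune:
  "weight n (\<lambda>i. prune (\<pi> i) K \<eta>) A
     = (if \<exists>i\<in>{1..n}. prunes (\<pi> i) K \<eta> (parents A i) then 0 else weight n \<pi> A)"
proof (cases "\<exists>i\<in>{1..n}. prunes (\<pi> i) K \<eta> (parents A i)")
  case True
  then have "(\<Prod>i = 1..n. prune (\<pi> i) K \<eta> (parents A i)) = 0"
    by (intro prod_zero) (auto simp: prune_eq)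
  with True show ?thesis unfolding weight_def by simp
next
  case False
  then have "(\<Prod>i = 1..n. prune (\<pi> i) K \<eta> (parents A i)) = (\<Prod>i = 1..n. \<pi> i (parents A i))"
    by (intro prod.cong) (auto simp: prune_eq)
  with False show ?thesis unfolding weight_def by simp
qed

definition set_parents :: "(nat \<times> nat) set \<Rightarrow> nat \<Rightarrow> nat set \<Rightarrow> (nat \<times> nat) set" where
  "set_parents A i R = {e\<in>A. snd e \<noteq> i} \<union> (\<lambda>j. (j, i)) ` R"

lemma parents_set_parents: "parents (set_parents A i R) k = (if k = i then R else parents A k)"
  unfolding parents_def set_parents_def by auto

lemma set_parents_set_parents: "set_parents (set_parents A i R) i S = set_parents A i S"
  unfolding set_parents_def by auto

lemma set_parents_parents: "set_parents A i (parents A i) = A"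
  unfolding set_parents_def parents_def by auto

lemma set_parents_in_dags:
  assumes "A \<in> dags n" "R \<subseteq> parents A i"
  shows "set_parents A i R \<in> dags n"
proof -
  have "set_parents A i R \<subseteq> A" using assms(2) unfolding set_parents_def parents_def by auto
  with assms(1) show ?thesis unfolding dags_def using acyclic_subset by blast
qed

lemma weight_set_parents:
  "i \<in> {1..n} \<Longrightarrow> weight n p (set_parents A i R) = p i R * (\<Prod>k\<in>{1..n} - {i}. p k (parents A k))"
  using weight_remove[of i n p "set_parents A i R"] by (simp add: parents_set_parents)

lemma inj_set_parents_parents: "inj (\<lambda>(A, R). (set_parents A i R, parents A i))"
proof (rule injI, clarsimp)
  fix A R A' R'
  assume B: "set_parents A i R = set_parents A' i R'" and S: "parents A i = parents A' i"
  show "A = A' \<and> R = R'"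
  proof
    show "A = A'"
      using arg_cong[OF B, of "\<lambda>B. set_parents B i (parents A i)"] S
      by (metis set_parents_set_parents set_parents_parents)
    show "R = R'" using arg_cong[OF B, of "\<lambda>B. parents B i"] by (simp add: parents_set_parents)
  qed
qed

lemma sum_set_parents_le:
  fixes f :: "(nat \<times> nat) set \<Rightarrow> nat set \<Rightarrow> real"
  assumes f_nonneg: "\<And>B S. B \<in> dags n \<Longrightarrow> f B S \<ge> 0"
  shows "(\<Sum>A\<in>dags n. \<Sum>R\<in>Pow (parents A i). f (set_parents A i R) (parents A i))
       \<le> (\<Sum>B\<in>dags n. \<Sum>S\<in>{S. parents B i \<subseteq> S \<and> S \<subseteq> {1..n} - {i}}. f B S)"
proof -
  define Q where "Q = Sigma (dags n) (\<lambda>A. Pow (parents A i))"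
  define Q' where "Q' = Sigma (dags n) (\<lambda>B. {S. parents B i \<subseteq> S \<and> S \<subseteq> {1..n} - {i}})"
  define h where "h = (\<lambda>(A, R). (set_parents A i R, parents A i))"
  have inj: "inj_on h Q"
    unfolding h_def using inj_set_parents_parents by (rule inj_on_subset) simp
  have image: "h ` Q \<subseteq> Q'"
  proof
    fix y assume "y \<in> h ` Q"
    then obtain A R where A: "A \<in> dags n" and R: "R \<subseteq> parents A i" and y: "y = h (A, R)"
      by (auto simp: Q_def)
    show "y \<in> Q'"
      unfolding y h_def Q'_def
      using set_parents_in_dags[OF A R] parents_subset_if_dags[OF A] R
      by (simp add: parents_set_parents)
  qed
  have fin_Q': "finite Q'"
    unfolding Q'_def
  proof (rule finite_SigmaI[OF finite_dags])
    show "finite {S. parents B i \<subseteq> S \<and> S \<subseteq> {1..n} - {i}}" for B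
      by (rule finite_subset[of _ "Pow ({1..n} - {i})"]) auto
  qed
  have "(\<Sum>A\<in>dags n. \<Sum>R\<in>Pow (parents A i). f (set_parents A i R) (parents A i))
      = (\<Sum>(A, R)\<in>Q. f (set_parents A i R) (parents A i))"
    unfolding Q_def by (rule sum.Sigma) (simp_all add: finite_dags finite_parents_if_dags)
  also have "\<dots> = (\<Sum>y\<in>h ` Q. case_prod f y)"
    unfolding sum.reindex[OF inj] by (simp add: h_def case_prod_unfold)
  also have "\<dots> \<le> (\<Sum>y\<in>Q'. case_prod f y)"
  proof (rule sum_mono2[OF fin_Q' image])
    fix y assume "y \<in> Q' - h ` Q"
    then obtain B S where "B \<in> dags n" "y = (B, S)" unfolding Q'_def by blast
    then show "0 \<le> case_prod f y" by (simp add: f_nonneg)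
  qed
  also have "\<dots> = (\<Sum>B\<in>dags n. \<Sum>S\<in>{S. parents B i \<subseteq> S \<and> S \<subseteq> {1..n} - {i}}. f B S)"
    unfolding Q'_def by (rule sum.Sigma[symmetric]) (simp_all add: finite_dags)
  finally show ?thesis .
qed

lemma weight_le_if_prunes:
  assumes i: "i \<in> {1..n}" and A: "A \<in> dags n" and eta: "\<eta> \<ge> 0"
    and nonneg: "\<And>i S. i \<in> {1..n} \<Longrightarrow> S \<subseteq> {1..n} - {i} \<Longrightarrow> \<pi> i S \<ge> 0"
    and pruned: "prunes (\<pi> i) K \<eta> (parents A i)"
  shows "weight n \<pi> A
    \<le> \<eta> * (\<Sum>R\<in>Pow (parents A i). psi_coeff K R (parents A i) * weight n \<pi> (set_parents A i R))"
proof -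
  define S where "S = parents A i"
  define r where "r = (\<Prod>k\<in>{1..n} - {i}. \<pi> k (parents A k))"
  obtain j where j: "j \<in> S" and lt: "\<pi> i S < \<eta> * psi (\<pi> i) K j S"
    using pruned by (auto simp: prunes_def S_def)
  have S_sub: "S \<subseteq> {1..n} - {i}" using parents_subset_if_dags[OF A] by (simp add: S_def)
  have r_nonneg: "r \<ge> 0"
    unfolding r_def by (intro prod_nonneg nonneg parents_subset_if_dags[OF A]) auto
  have "weight n \<pi> A = \<pi> i S * r" by (simp add: weight_remove[OF i] S_def r_def)
  also have "\<dots> \<le> \<eta> * psi (\<pi> i) K j S * r" using lt r_nonneg by (simp add: mult_right_mono)
  also have "\<dots> = \<eta> * (\<Sum>R\<in>{R. j \<in> R \<and> R \<subseteq> S}. psi_coeff K R S * (\<pi> i R * r))"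
    by (simp add: psi_eq_sum_psi_coeff sum_distrib_left sum_distrib_right mult_ac)
  also have "\<dots> \<le> \<eta> * (\<Sum>R\<in>Pow S. psi_coeff K R S * (\<pi> i R * r))"
  proof (intro mult_left_mono[OF _ eta] sum_mono2)
    show "finite (Pow S)" using finite_parents_if_dags[OF A] by (simp add: S_def)
    fix R assume "R \<in> Pow S - {R. j \<in> R \<and> R \<subseteq> S}"
    then have "R \<subseteq> {1..n} - {i}" using S_sub by blast
    then show "0 \<le> psi_coeff K R S * (\<pi> i R * r)"
      by (simp add: psi_coeff_nonneg nonneg[OF i] r_nonneg)
  qed auto
  also have "\<dots> = \<eta> * (\<Sum>R\<in>Pow S. psi_coeff K R S * weight n \<pi> (set_parents A i R))"
    by (simp add: weight_set_parents[OF i] r_def)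
  finally show ?thesis by (simp add: S_def)
qed

lemma sum_weight_prunes_le:
  assumes i: "i \<in> {1..n}" and eta: "\<eta> \<ge> 0"
    and nonneg: "\<And>i S. i \<in> {1..n} \<Longrightarrow> S \<subseteq> {1..n} - {i} \<Longrightarrow> \<pi> i S \<ge> 0"
  shows "(\<Sum>A\<in>{A\<in>dags n. prunes (\<pi> i) (n - 1) \<eta> (parents A i)}. weight n \<pi> A)
    \<le> \<eta> * (\<Sum>A\<in>dags n. weight n \<pi> A)"
proof -
  define f where "f B S = psi_coeff (n - 1) (parents B i) S * weight n \<pi> B" for B S
  have f_nonneg: "f B S \<ge> 0" if "B \<in> dags n" for B S
    using weight_nonneg[OF that nonneg] by (simp add: f_def psi_coeff_nonneg)
  have inner_nonneg: "(\<Sum>R\<in>Pow (parents A i). f (set_parents A i R) (parents A i)) \<ge> 0"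
    if "A \<in> dags n" for A
    using f_nonneg set_parents_in_dags[OF that] by (intro sum_nonneg) auto
  have "(\<Sum>A\<in>{A\<in>dags n. prunes (\<pi> i) (n - 1) \<eta> (parents A i)}. weight n \<pi> A)
      \<le> (\<Sum>A\<in>{A\<in>dags n. prunes (\<pi> i) (n - 1) \<eta> (parents A i)}.
            \<eta> * (\<Sum>R\<in>Pow (parents A i). f (set_parents A i R) (parents A i)))"
    using weight_le_if_prunes[OF i _ eta nonneg]
    by (intro sum_mono) (simp add: f_def parents_set_parents)
  also have "\<dots> \<le> (\<Sum>A\<in>dags n. \<eta> * (\<Sum>R\<in>Pow (parents A i). f (set_parents A i R) (parents A i)))"
    by (rule sum_mono2[OF finite_dags]) (auto simp: eta inner_nonneg)
  also have "\<dots> \<le> \<eta> * (\<Sum>B\<in>dags n. \<Sum>S\<in>{S. parents B i \<subseteq> S \<and> S \<subseteq> {1..n} - {i}}. f B S)"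
    unfolding sum_distrib_left[symmetric]
    by (intro mult_left_mono[OF _ eta] sum_set_parents_le f_nonneg)
  also have "\<dots> = \<eta> * (\<Sum>B\<in>dags n. weight n \<pi> B)"
  proof -
    have "(\<Sum>S\<in>{S. parents B i \<subseteq> S \<and> S \<subseteq> {1..n} - {i}}. f B S) = weight n \<pi> B"
      if "B \<in> dags n" for B
      using sum_psi_coeff_supersets[of "{1..n} - {i}" "n - 1", OF _ _ parents_subset_if_dags[OF that]] i
      by (simp add: f_def sum_distrib_right[symmetric])
    then show ?thesis by simp
  qed
  finally show ?thesis .
qed

lemma sum_weight_prune_ge:
  assumes eta: "\<eta> \<ge> 0"
    and nonneg: "\<And>i S. i \<in> {1..n} \<Longrightarrow> S \<subseteq> {1..n} - {i} \<Longrightarrow> \<pi> i S \<ge> 0"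
  shows "(1 - real n * \<eta>) * (\<Sum>A\<in>dags n. weight n \<pi> A)
    \<le> (\<Sum>A\<in>dags n. weight n (\<lambda>i. prune (\<pi> i) (n - 1) \<eta>) A)"
proof -
  define P where "P i A \<longleftrightarrow> prunes (\<pi> i) (n - 1) \<eta> (parents A i)" for i A
  define w where "w = weight n \<pi>"
  define wt where "wt = weight n (\<lambda>i. prune (\<pi> i) (n - 1) \<eta>)"
  have loss: "w A - wt A \<le> (\<Sum>i\<in>{1..n}. if P i A then w A else 0)" if A: "A \<in> dags n" for A
  proof (cases "\<exists>i\<in>{1..n}. P i A")
    case True
    then obtain i where i: "i \<in> {1..n}" "P i A" by blast
    have "w A = (if P i A then w A else 0)" using i by simp
    also have "\<dots> \<le> (\<Sum>i\<in>{1..n}. if P i A then w A else 0)"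
      using i weight_nonneg[OF A nonneg] by (intro member_le_sum) (auto simp: w_def)
    finally show ?thesis using True by (simp add: wt_def weight_prune P_def)
  next
    case False
    then show ?thesis
      using weight_nonneg[OF A nonneg] by (simp add: w_def wt_def weight_prune P_def sum_nonneg)
  qed
  have "(\<Sum>A\<in>dags n. w A) - (\<Sum>A\<in>dags n. wt A) = (\<Sum>A\<in>dags n. w A - wt A)"
    by (simp add: sum_subtractf)
  also have "\<dots> \<le> (\<Sum>A\<in>dags n. \<Sum>i\<in>{1..n}. if P i A then w A else 0)"
    by (rule sum_mono) (rule loss)
  also have "\<dots> = (\<Sum>i\<in>{1..n}. \<Sum>A\<in>{A\<in>dags n. P i A}. w A)"
    by (subst sum.swap) (simp add: sum.inter_filter[OF finite_dags])
  also have "\<dots> \<le> (\<Sum>i\<in>{1..n}. \<eta> * (\<Sum>A\<in>dags n. w A))"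
    by (rule sum_mono) (unfold P_def w_def, rule sum_weight_prunes_le[OF _ eta nonneg])
  also have "\<dots> = real n * \<eta> * (\<Sum>A\<in>dags n. w A)" by simp
  finally show ?thesis by (simp add: w_def wt_def algebra_simps)
qed

subsection \<open>Conditioning a distribution on a subset\<close>

context
  fixes D :: "'a set" and w v :: "'a \<Rightarrow> real"
  assumes finite_D: "finite D"
    and w_nonneg: "\<And>x. x \<in> D \<Longrightarrow> w x \<ge> 0"
    and truncation: "\<And>x. x \<in> D \<Longrightarrow> v x = w x \<or> v x = 0"
    and sum_v_pos: "sum v D > 0"
begin

lemma sum_truncation_le: "sum v D \<le> sum w D"
  by (rule sum_mono) (use truncation w_nonneg in fastforce)

lemma kl_divergence_truncation:
  "(\<Sum>x\<in>{x\<in>D. v x > 0}. v x / sum v D * ln ((v x / sum v D) / (w x / sum w D)))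
     = ln (sum w D / sum v D)"
proof -
  have sum_w_pos: "sum w D > 0" using sum_v_pos sum_truncation_le by linarith
  have "(\<Sum>x\<in>{x\<in>D. v x > 0}. v x / sum v D * ln ((v x / sum v D) / (w x / sum w D)))
      = (\<Sum>x\<in>{x\<in>D. v x > 0}. v x * (ln (sum w D / sum v D) / sum v D))"
  proof (rule sum.cong)
    fix x assume "x \<in> {x\<in>D. v x > 0}"
    then have "v x = w x" "v x > 0" using truncation by fastforce+
    then show "v x / sum v D * ln ((v x / sum v D) / (w x / sum w D))
        = v x * (ln (sum w D / sum v D) / sum v D)"
      using sum_v_pos sum_w_pos by simp
  qed simp
  also have "\<dots> = (\<Sum>x\<in>{x\<in>D. v x > 0}. v x) * (ln (sum w D / sum v D) / sum v D)"
    by (rule sum_distrib_right[symmetric])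
  also have "(\<Sum>x\<in>{x\<in>D. v x > 0}. v x) = sum v D"
    using finite_D truncation w_nonneg
    by (intro sum.mono_neutral_left) fastforce+
  finally show ?thesis using sum_v_pos by simp
qed

lemma total_variation_truncation:
  "(1/2) * (\<Sum>x\<in>D. \<bar>w x / sum w D - v x / sum v D\<bar>) = 1 - sum v D / sum w D"
proof -
  have sum_w_pos: "sum w D > 0" using sum_v_pos sum_truncation_le by linarith
  have "\<bar>w x / sum w D - v x / sum v D\<bar> = w x / sum w D + v x / sum v D - 2 * (v x / sum w D)"
    if "x \<in> D" for x
  proof (cases "v x = 0")
    case True
    then show ?thesis using w_nonneg[OF that] sum_w_pos by simp
  next
    case False
    then have "v x = w x" using truncation[OF that] by blast
    moreover have "w x / sum w D \<le> w x / sum v D"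
      using w_nonneg[OF that] sum_v_pos sum_truncation_le by (intro divide_left_mono) auto
    ultimately show ?thesis by simp
  qed
  then have "(\<Sum>x\<in>D. \<bar>w x / sum w D - v x / sum v D\<bar>)
      = sum w D / sum w D + sum v D / sum v D - 2 * (sum v D / sum w D)"
    by (simp add: sum.distrib sum_subtractf sum_divide_distrib[symmetric] sum_distrib_left)
  then show ?thesis using sum_v_pos sum_w_pos by simp
qed

end

theorem theorem2:
  fixes n :: nat and \<epsilon> :: real and \<pi> :: "nat \<Rightarrow> nat set \<Rightarrow> real"
  assumes n: "n \<ge> 2"
    and eps: "0 < \<epsilon>" "\<epsilon> < 1"
    and nonneg: "\<And>i S. i \<in> {1..n} \<Longrightarrow> S \<subseteq> {1..n} - {i} \<Longrightarrow> \<pi> i S \<ge> 0"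
  defines "Z \<equiv> (\<Sum>A\<in>dags n. weight n \<pi> A)"
    and "Zt \<equiv> (\<Sum>A\<in>dags n. weight n (\<lambda>i. prune (\<pi> i) (n - 1) (\<epsilon> / real n)) A)"
  assumes Zpos: "Z > 0"
  shows "Zt \<ge> (1 - \<epsilon>) * Z
     \<and> (\<Sum>A\<in>{A\<in>dags n. weight n (\<lambda>i. prune (\<pi> i) (n - 1) (\<epsilon> / real n)) A > 0}.
            (weight n (\<lambda>i. prune (\<pi> i) (n - 1) (\<epsilon> / real n)) A / Zt) * ln ((weight n (\<lambda>i. prune (\<pi> i) (n - 1) (\<epsilon> / real n)) A / Zt) / (weight n \<pi> A / Z)))
          \<le> \<epsilon> / (1 - \<epsilon>)
     \<and> (1/2) * (\<Sum>A\<in>dags n. \<bar>weight n \<pi> A / Z - weight n (\<lambda>i. prune (\<pi> i) (n - 1) (\<epsilon> / real n)) A / Zt\<bar>) \<le> \<epsilon>"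
proof -
  define w where "w = weight n \<pi>"
  define wt where "wt = weight n (\<lambda>i. prune (\<pi> i) (n - 1) (\<epsilon> / real n))"
  have Z_eq: "Z = sum w (dags n)" and Zt_eq: "Zt = sum wt (dags n)"
    by (simp_all add: Z_def Zt_def w_def wt_def)
  have mass: "(1 - \<epsilon>) * Z \<le> Zt"
    using sum_weight_prune_ge[where \<eta> = "\<epsilon> / real n" and n = n and \<pi> = \<pi>, OF _ nonneg] eps n by (simp add: Z_def Zt_def)
  have Zt_pos: "Zt > 0" using mass mult_pos_pos[of "1 - \<epsilon>" Z] eps Zpos by linarith
  have truncation: "finite (dags n)" "\<And>A. A \<in> dags n \<Longrightarrow> w A \<ge> 0"
    "\<And>A. A \<in> dags n \<Longrightarrow> wt A = w A \<or> wt A = 0" "sum wt (dags n) > 0"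
    using finite_dags weight_nonneg[OF _ nonneg] Zt_pos by (simp_all add: w_def wt_def weight_prune Zt_eq)
  have kl: "(\<Sum>A\<in>{A\<in>dags n. wt A > 0}. wt A / Zt * ln ((wt A / Zt) / (w A / Z))) = ln (Z / Zt)"
    unfolding Z_eq Zt_eq by (rule kl_divergence_truncation[OF truncation])
  have tv: "(1/2) * (\<Sum>A\<in>dags n. \<bar>w A / Z - wt A / Zt\<bar>) = 1 - Zt / Z"
    unfolding Z_eq Zt_eq by (rule total_variation_truncation[OF truncation])
  have "ln (Z / Zt) \<le> Z / Zt - 1" using Zpos Zt_pos by (intro ln_le_minus_one) simp
  also have "\<dots> \<le> \<epsilon> / (1 - \<epsilon>)" using mass eps Zt_pos by (simp add: field_simps)
  finally have "ln (Z / Zt) \<le> \<epsilon> / (1 - \<epsilon>)" .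
  moreover have "1 - Zt / Z \<le> \<epsilon>" using mass Zpos by (simp add: field_simps)
  ultimately show ?thesis
    unfolding wt_def[symmetric] w_def[symmetric] kl tv using mass by blast
qed

end
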